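(* If $H=(\alpha,\beta)$ is a semi-norming $k$-hypergraph pair over $V$, then $\alpha(\omega)+\beta(\omega)\ge1$ for every $\omega\in{\rm supp}(\alpha)\cup{\rm supp}(\beta)$.
   Context: A $k$-hypergraph pair $H=(\alpha,\beta)$ consists of finite nonempty sets $V_1,\dots,V_k$ and functions $\alpha,\beta:V\to\mathbb{R}$, where $V=V_1\times\cdots\times V_k$; its size is $|H|=\sum_{\omega\in V}(|\alpha(\omega)|+|\beta(\omega)|)$. All measures are positive. For a measure space $\mathcal M=(\Omega,\mathcal F,\mu)$, the space $\Omega^{V_1}\times\cdots\times\Omega^{V_k}$ (points $x=(x_{i,v})_{i\in[k],v\in V_i}$) carries the product measure, and each $\omega=(\omega_1,\dots,\omega_k)\in V$ defines the projection $\omega(x)=(x_{1,\omega_1},\dots,x_{k,\omega_k})\in\Omega^k$. For measurable $f:\Omega^k\to\mathbb C$, $f^H(x)=\prod_{\omega\in V} f(\omega(x))^{\alpha(\omega)}\,\overline{f(\omega(x))^{\beta(\omega)}}$, with the convention $0^0=1$ (non-integer complex powers taken with a fixed branch). When $\alpha,\beta\ge 0$, set $\|f\|_H=(\int f^H)^{1/|H|}$, and let $L_H(\mathcal M)$ be the set of measurable $f$ with $\|\,|f|\,\|_H<\infty$. $H$ (with $\alpha,\beta\ge0$) is called norming (resp. semi-norming) if $\|\cdot\|_H$ is a norm (resp. semi-norm) on $L_H(\mathcal M)$ for every measure space $\mathcal M$. *)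

theory Defs
  imports "HOL-Probability.Probability"
begin

definition hpow :: "complex \<Rightarrow> real \<Rightarrow> complex" where
  "hpow z a = (if a = 0 then 1 else z powr (complex_of_real a))"

text \<open>V = V_1 x ... x V_k, indices 0..k-1, elements are functions on {..<k}.\<close>
definition hvert :: "nat \<Rightarrow> (nat \<Rightarrow> 'v set) \<Rightarrow> (nat \<Rightarrow> 'v) set" where
  "hvert k Vs = PiE {..<k} Vs"

definition hsize :: "nat \<Rightarrow> (nat \<Rightarrow> 'v set) \<Rightarrow> ((nat \<Rightarrow> 'v) \<Rightarrow> real)
    \<Rightarrow> ((nat \<Rightarrow> 'v) \<Rightarrow> real) \<Rightarrow> real" where
  "hsize k Vs \<alpha> \<beta> = (\<Sum>\<omega>\<in>hvert k Vs. \<bar>\<alpha> \<omega>\<bar> + \<bar>\<beta> \<omega>\<bar>)"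

text \<open>The space Omega^{V_1} x ... x Omega^{V_k}; points x indexed by pairs (i,v), v in V_i.\<close>
definition hspace :: "nat \<Rightarrow> (nat \<Rightarrow> 'v set) \<Rightarrow> 'a measure \<Rightarrow> (nat \<times> 'v \<Rightarrow> 'a) measure" where
  "hspace k Vs M = PiM (SIGMA i:{..<k}. Vs i) (\<lambda>_. M)"

definition hdom :: "nat \<Rightarrow> 'a measure \<Rightarrow> (nat \<Rightarrow> 'a) measure" where
  "hdom k M = PiM {..<k} (\<lambda>_. M)"

definition hproj :: "nat \<Rightarrow> (nat \<Rightarrow> 'v) \<Rightarrow> (nat \<times> 'v \<Rightarrow> 'a) \<Rightarrow> (nat \<Rightarrow> 'a)" where
  "hproj k \<omega> x = (\<lambda>i\<in>{..<k}. x (i, \<omega> i))"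

definition fH :: "nat \<Rightarrow> (nat \<Rightarrow> 'v set) \<Rightarrow> ((nat \<Rightarrow> 'v) \<Rightarrow> real) \<Rightarrow> ((nat \<Rightarrow> 'v) \<Rightarrow> real)
    \<Rightarrow> ((nat \<Rightarrow> 'a) \<Rightarrow> complex) \<Rightarrow> (nat \<times> 'v \<Rightarrow> 'a) \<Rightarrow> complex" where
  "fH k Vs \<alpha> \<beta> f x = (\<Prod>\<omega>\<in>hvert k Vs.
      hpow (f (hproj k \<omega> x)) (\<alpha> \<omega>) * cnj (hpow (f (hproj k \<omega> x)) (\<beta> \<omega>)))"

definition LH :: "nat \<Rightarrow> (nat \<Rightarrow> 'v set) \<Rightarrow> ((nat \<Rightarrow> 'v) \<Rightarrow> real) \<Rightarrow> ((nat \<Rightarrow> 'v) \<Rightarrow> real)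
    \<Rightarrow> 'a measure \<Rightarrow> ((nat \<Rightarrow> 'a) \<Rightarrow> complex) set" where
  "LH k Vs \<alpha> \<beta> M = {f \<in> borel_measurable (hdom k M).
      (\<integral>\<^sup>+ x. ennreal (cmod (fH k Vs \<alpha> \<beta> (\<lambda>y. complex_of_real (cmod (f y))) x)) \<partial>hspace k Vs M) < \<infinity>}"

text \<open>||f||_H = (integral of f^H)^(1/|H|) (the integral being a nonnegative real).\<close>
definition hnorm :: "nat \<Rightarrow> (nat \<Rightarrow> 'v set) \<Rightarrow> ((nat \<Rightarrow> 'v) \<Rightarrow> real) \<Rightarrow> ((nat \<Rightarrow> 'v) \<Rightarrow> real)
    \<Rightarrow> 'a measure \<Rightarrow> ((nat \<Rightarrow> 'a) \<Rightarrow> complex) \<Rightarrow> real" where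
  "hnorm k Vs \<alpha> \<beta> M f =
     (Re (\<integral>x. fH k Vs \<alpha> \<beta> f x \<partial>hspace k Vs M)) powr (1 / hsize k Vs \<alpha> \<beta>)"

definition semi_norming_on :: "nat \<Rightarrow> (nat \<Rightarrow> 'v set) \<Rightarrow> ((nat \<Rightarrow> 'v) \<Rightarrow> real)
    \<Rightarrow> ((nat \<Rightarrow> 'v) \<Rightarrow> real) \<Rightarrow> 'a measure \<Rightarrow> bool" where
  "semi_norming_on k Vs \<alpha> \<beta> M \<longleftrightarrow>
     (\<forall>f\<in>LH k Vs \<alpha> \<beta> M.
        Im (\<integral>x. fH k Vs \<alpha> \<beta> f x \<partial>hspace k Vs M) = 0 \<and>
        Re (\<integral>x. fH k Vs \<alpha> \<beta> f x \<partial>hspace k Vs M) \<ge> 0 \<and>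
        (\<forall>c::complex. (\<lambda>y. c * f y) \<in> LH k Vs \<alpha> \<beta> M \<and>
           hnorm k Vs \<alpha> \<beta> M (\<lambda>y. c * f y) = cmod c * hnorm k Vs \<alpha> \<beta> M f) \<and>
        (\<forall>g\<in>LH k Vs \<alpha> \<beta> M. (\<lambda>y. f y + g y) \<in> LH k Vs \<alpha> \<beta> M \<and>
           hnorm k Vs \<alpha> \<beta> M (\<lambda>y. f y + g y) \<le> hnorm k Vs \<alpha> \<beta> M f + hnorm k Vs \<alpha> \<beta> M g))"

definition semi_norming :: "nat \<Rightarrow> (nat \<Rightarrow> 'v set) \<Rightarrow> ((nat \<Rightarrow> 'v) \<Rightarrow> real)
    \<Rightarrow> ((nat \<Rightarrow> 'v) \<Rightarrow> real) \<Rightarrow> bool" where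
  "semi_norming k Vs \<alpha> \<beta> \<longleftrightarrow>
     (\<forall>\<omega>\<in>hvert k Vs. \<alpha> \<omega> \<ge> 0 \<and> \<beta> \<omega> \<ge> 0) \<and>
     (\<forall>M :: real measure. semi_norming_on k Vs \<alpha> \<beta> M)"

end

theory Submission
  imports Defs
begin

(* Take the two-point measure space {0, 1} with counting measure and let s = alpha(w) +
   beta(w).  For t >= 0 consider the probe f_t on {0,1}^k that equals t at the all-ones point and
   1 elsewhere, so f_t = f_0 + t * 1_{all ones}.  For nonnegative real functions the integral of
   f^H is a finite sum of products of powers ("homomorphism density"); it is monotone in f, the
   configuration x that marks exactly the coordinates of w contributes t^s to the density of f_t
   and 0 to that of f_0, and the all-zero configuration shows that the density A of f_0 is >= 1.
   Hence, with p = 1/|H|, the triangle inequality and homogeneity of the semi-norm give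
       (A + t^s)^p <= ||f_t||_H <= ||f_0||_H + t ||1_{all ones}||_H = A^p + C t   (0 < t <= 1).
   Since u |-> (A + u)^p has positive derivative at 0, the left side exceeds A^p by about t^s,
   which for s < 1 is not O(t).  So s >= 1. *)

(* The increment of u |-> (A + u)^p at 0 is eventually bounded below by a positive multiple of u,
   since the derivative p A^(p-1) is positive. *)
lemma powr_increment_eventually_linear:
  fixes A p :: real
  assumes "A > 0" and "p > 0"
  shows "\<exists>c>0. eventually (\<lambda>u. c * u \<le> (A + u) powr p - A powr p) (at_right 0)"
proof -
  define \<kappa> where "\<kappa> = p * A powr (p - 1)"
  have \<kappa>_pos: "\<kappa> > 0" using assms by (simp add: \<kappa>_def)
  have "((\<lambda>z. z powr p) has_real_derivative \<kappa>) (at (0 + A))"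
    using has_real_derivative_powr[OF \<open>A > 0\<close>] by (simp add: \<kappa>_def)
  hence "((\<lambda>u. (u + A) powr p) has_real_derivative \<kappa>) (at 0)"
    by (rule DERIV_shift[THEN iffD1])
  hence "((\<lambda>u. ((u + A) powr p - A powr p) / u) \<longlongrightarrow> \<kappa>) (at 0)"
    unfolding DERIV_def by simp
  hence "((\<lambda>u. ((u + A) powr p - A powr p) / u) \<longlongrightarrow> \<kappa>) (at_right 0)"
    by (rule tendsto_mono[rotated]) (simp add: at_within_le_at)
  hence "eventually (\<lambda>u. \<kappa> / 2 < ((u + A) powr p - A powr p) / u) (at_right 0)"
    using \<kappa>_pos by (intro order_tendstoD(1)) auto
  hence "eventually (\<lambda>u. \<kappa> / 2 * u \<le> (A + u) powr p - A powr p) (at_right 0)"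
    using eventually_at_right_less[of "0::real"]
    by eventually_elim (simp add: field_simps add.commute)
  thus ?thesis using \<kappa>_pos by (intro exI[of _ "\<kappa> / 2"]) simp
qed

lemma powr_at_right_zero:
  fixes s :: real
  assumes "s > 0"
  shows "filterlim (\<lambda>t. t powr s) (at_right 0) (at_right 0)"
proof -
  have "((\<lambda>t. t powr s) \<longlongrightarrow> 0) (at_right (0::real))"
    using assms eventually_at_right_less[of "0::real"]
    by (intro tendsto_zero_powrI[OF tendsto_ident_at tendsto_const])
       (auto elim: eventually_mono)
  moreover have "eventually (\<lambda>t. t powr s \<in> {0<..}) (at_right (0::real))"
    using eventually_at_right_less[of "0::real"] by eventually_elim simp
  ultimately show ?thesis by (simp add: filterlim_at)
qed

lemma powr_sublinear_perturbation_impossible: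
  fixes A p s C :: real
  assumes "A > 0" and "p > 0" and "0 < s" "s < 1"
    and bound: "\<And>t. 0 < t \<Longrightarrow> t \<le> 1 \<Longrightarrow> (A + t powr s) powr p \<le> A powr p + C * t"
  shows False
proof -
  obtain c where "c > 0" and incr: "eventually (\<lambda>u. c * u \<le> (A + u) powr p - A powr p) (at_right 0)"
    using powr_increment_eventually_linear[OF \<open>A > 0\<close> \<open>p > 0\<close>] by blast
  have incr': "eventually (\<lambda>t. c * t powr s \<le> (A + t powr s) powr p - A powr p) (at_right 0)"
    using eventually_compose_filterlim[OF incr powr_at_right_zero[OF \<open>s > 0\<close>]] by simp
  have "((\<lambda>t. C * t powr (1 - s)) \<longlongrightarrow> C * 0) (at_right (0::real))"
    using \<open>s < 1\<close> eventually_at_right_less[of "0::real"]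
    by (intro tendsto_mult tendsto_const tendsto_zero_powrI[OF tendsto_ident_at tendsto_const])
       (auto elim: eventually_mono)
  hence small: "eventually (\<lambda>t. C * t powr (1 - s) < c) (at_right 0)"
    using \<open>c > 0\<close> by (intro order_tendstoD(2)) auto
  have unit: "eventually (\<lambda>t::real. 0 < t \<and> t \<le> 1) (at_right 0)"
    unfolding eventually_at_right_field by (rule exI[of _ 1]) simp
  obtain t where t: "0 < t" "t \<le> 1" and lower: "c * t powr s \<le> (A + t powr s) powr p - A powr p"
    and "C * t powr (1 - s) < c"
    using eventually_happens'[OF _ eventually_conj[OF incr' eventually_conj[OF small unit]]] by auto
  hence "C * t < c * t powr s"
    using t by (simp add: powr_diff field_simps)
  with lower bound[OF t] show False by simp
qed

definition rpow :: "real \<Rightarrow> real \<Rightarrow> real" where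
  "rpow r a = (if a = 0 then 1 else r powr a)"

lemma rpow_nonneg: "0 \<le> rpow r a"
  by (simp add: rpow_def)

lemma rpow_one [simp]: "rpow 1 a = 1"
  by (simp add: rpow_def)

lemma rpow_pos: "0 < r \<Longrightarrow> rpow r a = r powr a"
  by (simp add: rpow_def)

lemma rpow_zero: "a \<noteq> 0 \<Longrightarrow> rpow 0 a = 0"
  by (simp add: rpow_def)

lemma rpow_mono: "0 \<le> a \<Longrightarrow> 0 \<le> r \<Longrightarrow> r \<le> r' \<Longrightarrow> rpow r a \<le> rpow r' a"
  by (simp add: rpow_def powr_mono2)

lemma hpow_of_real: "0 \<le> r \<Longrightarrow> hpow (complex_of_real r) a = complex_of_real (rpow r a)"
  by (simp add: hpow_def rpow_def powr_of_real)

definition hterm :: "nat \<Rightarrow> (nat \<Rightarrow> 'v set) \<Rightarrow> ((nat \<Rightarrow> 'v) \<Rightarrow> real) \<Rightarrow> ((nat \<Rightarrow> 'v) \<Rightarrow> real)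
    \<Rightarrow> ((nat \<Rightarrow> 'a) \<Rightarrow> real) \<Rightarrow> (nat \<times> 'v \<Rightarrow> 'a) \<Rightarrow> real" where
  "hterm k Vs \<alpha> \<beta> F x =
     (\<Prod>\<omega>\<in>hvert k Vs. rpow (F (hproj k \<omega> x)) (\<alpha> \<omega>) * rpow (F (hproj k \<omega> x)) (\<beta> \<omega>))"

lemma fH_of_real:
  assumes "\<And>y. 0 \<le> F y"
  shows "fH k Vs \<alpha> \<beta> (\<lambda>y. complex_of_real (F y)) x = complex_of_real (hterm k Vs \<alpha> \<beta> F x)"
  unfolding fH_def hterm_def using assms by (simp add: hpow_of_real)

lemma hterm_nonneg: "0 \<le> hterm k Vs \<alpha> \<beta> F x"
  unfolding hterm_def by (intro prod_nonneg) (simp add: rpow_nonneg)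

lemma hterm_mono:
  assumes "\<forall>\<omega>\<in>hvert k Vs. 0 \<le> \<alpha> \<omega> \<and> 0 \<le> \<beta> \<omega>"
    and "\<And>y. 0 \<le> F y" and "\<And>y. F y \<le> G y"
  shows "hterm k Vs \<alpha> \<beta> F x \<le> hterm k Vs \<alpha> \<beta> G x"
  unfolding hterm_def using assms order_trans[OF assms(2,3)]
  by (intro prod_mono) (auto intro!: mult_mono rpow_mono simp: rpow_nonneg)

definition hcube :: "nat \<Rightarrow> (nat \<Rightarrow> 'v set) \<Rightarrow> 'a set \<Rightarrow> (nat \<times> 'v \<Rightarrow> 'a) set" where
  "hcube k Vs \<Omega> = PiE (SIGMA i:{..<k}. Vs i) (\<lambda>_. \<Omega>)"

definition hdens :: "nat \<Rightarrow> (nat \<Rightarrow> 'v set) \<Rightarrow> ((nat \<Rightarrow> 'v) \<Rightarrow> real) \<Rightarrow> ((nat \<Rightarrow> 'v) \<Rightarrow> real)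
    \<Rightarrow> 'a set \<Rightarrow> ((nat \<Rightarrow> 'a) \<Rightarrow> real) \<Rightarrow> real" where
  "hdens k Vs \<alpha> \<beta> \<Omega> F = (\<Sum>x\<in>hcube k Vs \<Omega>. hterm k Vs \<alpha> \<beta> F x)"

lemma finite_hcube:
  "\<forall>i<k. finite (Vs i) \<Longrightarrow> finite \<Omega> \<Longrightarrow> finite (hcube k Vs \<Omega>)"
  unfolding hcube_def by (intro finite_PiE finite_SigmaI) auto

lemma hspace_count_space:
  assumes "\<forall>i<k. finite (Vs i)" and "finite \<Omega>"
  shows "hspace k Vs (count_space \<Omega>) = count_space (hcube k Vs \<Omega>)"
  unfolding hspace_def hcube_def using assms
  by (intro count_space_PiM_finite finite_SigmaI) (auto intro: countable_finite)

lemma hdom_count_space: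
  "finite \<Omega> \<Longrightarrow> hdom k (count_space \<Omega>) = count_space (PiE {..<k} (\<lambda>_. \<Omega>))"
  unfolding hdom_def by (intro count_space_PiM_finite) (auto intro: countable_finite)

lemma LH_count_space:
  assumes "\<forall>i<k. finite (Vs i)" and "finite \<Omega>"
  shows "f \<in> LH k Vs \<alpha> \<beta> (count_space \<Omega>)"
  unfolding LH_def hspace_count_space[OF assms] hdom_count_space[OF assms(2)]
  using finite_hcube[OF assms] by (simp add: nn_integral_count_space_finite)

lemma hnorm_count_space:
  assumes "\<forall>i<k. finite (Vs i)" and "finite \<Omega>" and "\<And>y. 0 \<le> F y"
  shows "hnorm k Vs \<alpha> \<beta> (count_space \<Omega>) (\<lambda>y. complex_of_real (F y))
           = hdens k Vs \<alpha> \<beta> \<Omega> F powr (1 / hsize k Vs \<alpha> \<beta>)"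
  unfolding hnorm_def hspace_count_space[OF assms(1,2)] fH_of_real[OF assms(3)] hdens_def
    lebesgue_integral_count_space_finite[OF finite_hcube[OF assms(1,2)]]
  by (simp flip: of_real_sum)

lemma hsize_pos:
  assumes "\<forall>i<k. finite (Vs i)" and "\<omega> \<in> hvert k Vs" and "\<alpha> \<omega> \<noteq> 0 \<or> \<beta> \<omega> \<noteq> 0"
  shows "0 < hsize k Vs \<alpha> \<beta>"
proof -
  have "finite (hvert k Vs)" unfolding hvert_def using assms(1) by (intro finite_PiE) auto
  hence "\<bar>\<alpha> \<omega>\<bar> + \<bar>\<beta> \<omega>\<bar> \<le> hsize k Vs \<alpha> \<beta>"
    unfolding hsize_def using assms(2) by (intro member_le_sum) auto
  with assms(3) show ?thesis by linarith
qed

(* The test functions on {0,1}^k: probe k t is t at the all-ones point and 1 elsewhere, and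
   ones_ind k is the indicator of the all-ones point, so probe k t = probe k 0 + t * ones_ind k. *)
definition all_ones :: "nat \<Rightarrow> (nat \<Rightarrow> real) \<Rightarrow> bool" where
  "all_ones k y \<longleftrightarrow> (\<forall>i<k. y i = 1)"

definition probe :: "nat \<Rightarrow> real \<Rightarrow> (nat \<Rightarrow> real) \<Rightarrow> real" where
  "probe k t y = (if all_ones k y then t else 1)"

definition ones_ind :: "nat \<Rightarrow> (nat \<Rightarrow> real) \<Rightarrow> real" where
  "ones_ind k y = (if all_ones k y then 1 else 0)"

(* At the all-zero configuration no projection is all-ones (k >= 1), so probe k 0 is 1 there
   and the summand equals 1. *)
lemma hterm_probe_origin:
  assumes "k \<ge> 1"
  shows "hterm k Vs \<alpha> \<beta> (probe k 0) (\<lambda>_\<in>SIGMA i:{..<k}. Vs i. 0) = 1"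
  unfolding hterm_def
proof (intro prod.neutral ballI)
  fix w assume "w \<in> hvert k Vs"
  have "0 < k" using assms by simp
  hence "w 0 \<in> Vs 0" using PiE_mem[OF \<open>w \<in> hvert k Vs\<close>[unfolded hvert_def], of 0] by simp
  hence "hproj k w (\<lambda>_\<in>SIGMA i:{..<k}. Vs i. 0) 0 = 0"
    using \<open>0 < k\<close> unfolding hproj_def by simp
  hence "\<not> all_ones k (hproj k w (\<lambda>_\<in>SIGMA i:{..<k}. Vs i. 0))"
    using \<open>0 < k\<close> unfolding all_ones_def by (metis zero_neq_one)
  thus "rpow (probe k 0 (hproj k w (\<lambda>_\<in>SIGMA i:{..<k}. Vs i. 0))) (\<alpha> w)
        * rpow (probe k 0 (hproj k w (\<lambda>_\<in>SIGMA i:{..<k}. Vs i. 0))) (\<beta> w) = 1"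
    by (simp add: probe_def)
qed

definition hmark :: "nat \<Rightarrow> (nat \<Rightarrow> 'v set) \<Rightarrow> (nat \<Rightarrow> 'v) \<Rightarrow> nat \<times> 'v \<Rightarrow> real" where
  "hmark k Vs \<omega> = (\<lambda>(i, v)\<in>SIGMA i:{..<k}. Vs i. if v = \<omega> i then 1 else 0)"

lemma hmark_in_hcube: "hmark k Vs \<omega> \<in> hcube k Vs {0, 1}"
  unfolding hmark_def hcube_def by (rule PiE_I) auto

lemma all_ones_hmark:
  assumes "w \<in> hvert k Vs" and "\<omega> \<in> hvert k Vs"
  shows "all_ones k (hproj k w (hmark k Vs \<omega>)) \<longleftrightarrow> w = \<omega>"
proof
  assume ones: "all_ones k (hproj k w (hmark k Vs \<omega>))"
  show "w = \<omega>"
  proof (rule PiE_ext)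
    show "w \<in> PiE {..<k} Vs" "\<omega> \<in> PiE {..<k} Vs" using assms unfolding hvert_def by auto
    fix i assume i: "i \<in> {..<k}"
    hence "(i, w i) \<in> (SIGMA i:{..<k}. Vs i)" using assms(1) unfolding hvert_def by auto
    with i ones show "w i = \<omega> i"
      unfolding all_ones_def hproj_def hmark_def by (auto split: if_split_asm)
  qed
next
  assume "w = \<omega>"
  with assms(2) show "all_ones k (hproj k w (hmark k Vs \<omega>))"
    unfolding all_ones_def hproj_def hmark_def hvert_def by auto
qed

lemma hterm_probe_hmark:
  assumes "\<forall>i<k. finite (Vs i)" and "\<omega> \<in> hvert k Vs" and "0 < t"
  shows "hterm k Vs \<alpha> \<beta> (probe k t) (hmark k Vs \<omega>) = t powr (\<alpha> \<omega> + \<beta> \<omega>)"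
proof -
  have "finite (hvert k Vs)" unfolding hvert_def using assms(1) by (intro finite_PiE) auto
  have "hterm k Vs \<alpha> \<beta> (probe k t) (hmark k Vs \<omega>)
        = (\<Prod>w\<in>hvert k Vs. if w = \<omega> then t powr \<alpha> \<omega> * t powr \<beta> \<omega> else 1)"
    unfolding hterm_def using assms(2,3) all_ones_hmark[OF _ assms(2)]
    by (intro prod.cong) (auto simp: probe_def rpow_pos)
  also have "\<dots> = t powr (\<alpha> \<omega> + \<beta> \<omega>)"
    using \<open>finite (hvert k Vs)\<close> assms(2) by (simp add: prod.delta powr_add)
  finally show ?thesis .
qed

lemma hterm_probe_zero_hmark:
  assumes "\<forall>i<k. finite (Vs i)" and "\<omega> \<in> hvert k Vs" and "\<alpha> \<omega> \<noteq> 0 \<or> \<beta> \<omega> \<noteq> 0"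
  shows "hterm k Vs \<alpha> \<beta> (probe k 0) (hmark k Vs \<omega>) = 0"
proof -
  have "finite (hvert k Vs)" unfolding hvert_def using assms(1) by (intro finite_PiE) auto
  moreover have "probe k 0 (hproj k \<omega> (hmark k Vs \<omega>)) = 0"
    using all_ones_hmark[OF assms(2,2)] by (simp add: probe_def)
  ultimately show ?thesis
    unfolding hterm_def using assms(2,3)
    by (intro prod_zero bexI[of _ \<omega>]) (auto simp: rpow_zero)
qed

(* The density of probe k 0 is at least 1, from the all-zero configuration. *)
lemma hdens_probe_zero_ge_one:
  assumes "k \<ge> 1" and "\<forall>i<k. finite (Vs i)"
  shows "1 \<le> hdens k Vs \<alpha> \<beta> {0, 1} (probe k 0)"
proof -
  have "(\<lambda>_\<in>SIGMA i:{..<k}. Vs i. 0) \<in> hcube k Vs {0, 1::real}"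
    unfolding hcube_def by auto
  thus ?thesis
    unfolding hdens_def using hterm_probe_origin[OF assms(1)] finite_hcube[OF assms(2)]
    by (metis finite.emptyI finite.insertI hterm_nonneg member_le_sum)
qed

(* Raising the probe from 0 to t increases the density by at least t^(alpha w + beta w):
   every summand increases, and the one at the marking of w increases by that amount. *)
lemma hdens_probe_gain:
  assumes "\<forall>i<k. finite (Vs i)" and "\<forall>\<omega>\<in>hvert k Vs. 0 \<le> \<alpha> \<omega> \<and> 0 \<le> \<beta> \<omega>"
    and "\<omega> \<in> hvert k Vs" and "\<alpha> \<omega> \<noteq> 0 \<or> \<beta> \<omega> \<noteq> 0" and "0 < t"
  shows "hdens k Vs \<alpha> \<beta> {0, 1} (probe k 0) + t powr (\<alpha> \<omega> + \<beta> \<omega>)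
           \<le> hdens k Vs \<alpha> \<beta> {0, 1} (probe k t)"
proof -
  let ?T = "\<lambda>F. hterm k Vs \<alpha> \<beta> F"
  have fin: "finite (hcube k Vs {0, 1::real})" using assms(1) by (intro finite_hcube) auto
  have probe_mono: "?T (probe k 0) x \<le> ?T (probe k t) x" for x
    by (rule hterm_mono[OF assms(2)]) (use assms(5) in \<open>auto simp: probe_def\<close>)
  have "t powr (\<alpha> \<omega> + \<beta> \<omega>) = ?T (probe k t) (hmark k Vs \<omega>) - ?T (probe k 0) (hmark k Vs \<omega>)"
    using hterm_probe_hmark[OF assms(1,3,5)] hterm_probe_zero_hmark[where \<alpha> = \<alpha> and \<beta> = \<beta>, OF assms(1,3,4)] by simp
  also have "\<dots> \<le> (\<Sum>x\<in>hcube k Vs {0, 1}. ?T (probe k t) x - ?T (probe k 0) x)"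
    using fin hmark_in_hcube probe_mono by (intro member_le_sum) auto
  also have "\<dots> = hdens k Vs \<alpha> \<beta> {0, 1} (probe k t) - hdens k Vs \<alpha> \<beta> {0, 1} (probe k 0)"
    unfolding hdens_def by (simp add: sum_subtractf)
  finally show ?thesis by simp
qed

(* Triangle inequality and homogeneity applied to probe k t = probe k 0 + t * ones_ind k,
   rewritten through the densities. *)
lemma seminorm_probe_triangle:
  assumes fin: "\<forall>i<k. finite (Vs i)"
    and seminorm: "semi_norming_on k Vs \<alpha> \<beta> (count_space {0, 1::real})" and "0 \<le> t"
  shows "hdens k Vs \<alpha> \<beta> {0, 1} (probe k t) powr (1 / hsize k Vs \<alpha> \<beta>)
           \<le> hdens k Vs \<alpha> \<beta> {0, 1} (probe k 0) powr (1 / hsize k Vs \<alpha> \<beta>)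
             + hnorm k Vs \<alpha> \<beta> (count_space {0, 1}) (\<lambda>y. complex_of_real (ones_ind k y)) * t"
proof -
  let ?N = "hnorm k Vs \<alpha> \<beta> (count_space {0, 1::real})"
  let ?f = "\<lambda>y. complex_of_real (probe k 0 y)" and ?g = "\<lambda>y. complex_of_real (ones_ind k y)"
  have fin01: "finite {0, 1::real}" by simp
  have triangle: "?N (\<lambda>y. f y + g y) \<le> ?N f + ?N g"
    and homogeneous: "?N (\<lambda>y. c * f y) = cmod c * ?N f" for f g c
    using seminorm LH_count_space[OF fin fin01] unfolding semi_norming_on_def by blast+
  have norm: "?N (\<lambda>y. complex_of_real (probe k u y))
                = hdens k Vs \<alpha> \<beta> {0, 1} (probe k u) powr (1 / hsize k Vs \<alpha> \<beta>)" if "0 \<le> u" for u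
    by (rule hnorm_count_space[OF fin fin01]) (use that in \<open>simp add: probe_def\<close>)
  have "?N (\<lambda>y. complex_of_real (probe k t y)) = ?N (\<lambda>y. ?f y + complex_of_real t * ?g y)"
    by (rule arg_cong[where f = ?N]) (auto simp: probe_def ones_ind_def)
  also have "\<dots> \<le> ?N ?f + ?N ?g * t"
    using triangle[of ?f "\<lambda>y. complex_of_real t * ?g y"] homogeneous[of "complex_of_real t" ?g]
      \<open>0 \<le> t\<close> by (simp add: mult.commute)
  finally show ?thesis using norm[of t] norm[of 0] \<open>0 \<le> t\<close> by simp
qed

theorem corollary2p6:
  fixes k :: nat and Vs :: "nat \<Rightarrow> 'v set" and \<alpha> \<beta> :: "(nat \<Rightarrow> 'v) \<Rightarrow> real"
    and \<omega> :: "nat \<Rightarrow> 'v"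
  assumes "k \<ge> 1"
    and "\<forall>i<k. finite (Vs i) \<and> Vs i \<noteq> {}"
    and "semi_norming k Vs \<alpha> \<beta>"
    and "\<omega> \<in> hvert k Vs"
    and "\<alpha> \<omega> \<noteq> 0 \<or> \<beta> \<omega> \<noteq> 0"
  shows "\<alpha> \<omega> + \<beta> \<omega> \<ge> 1"
proof (rule ccontr)
  assume "\<not> \<alpha> \<omega> + \<beta> \<omega> \<ge> 1"
  have fin: "\<forall>i<k. finite (Vs i)" using assms(2) by auto
  have nonneg: "\<forall>w\<in>hvert k Vs. 0 \<le> \<alpha> w \<and> 0 \<le> \<beta> w"
    and seminorm: "semi_norming_on k Vs \<alpha> \<beta> (count_space {0, 1::real})"
    using assms(3) unfolding semi_norming_def by blast+
  let ?A = "hdens k Vs \<alpha> \<beta> {0, 1} (probe k 0)" and ?p = "1 / hsize k Vs \<alpha> \<beta>"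
  have size_pos: "0 < hsize k Vs \<alpha> \<beta>"
    using hsize_pos[where \<alpha> = \<alpha> and \<beta> = \<beta>, OF fin assms(4,5)] .
  have A_ge_one: "1 \<le> ?A" using hdens_probe_zero_ge_one[OF assms(1) fin, of \<alpha> \<beta>] .
  have "0 \<le> \<alpha> \<omega>" "0 \<le> \<beta> \<omega>" using nonneg assms(4) by auto
  show False
  proof (rule powr_sublinear_perturbation_impossible)
    show "0 < ?A" "0 < ?p" using A_ge_one size_pos by simp_all
    show "0 < \<alpha> \<omega> + \<beta> \<omega>" using \<open>0 \<le> \<alpha> \<omega>\<close> \<open>0 \<le> \<beta> \<omega>\<close> assms(5) by linarith
    show "\<alpha> \<omega> + \<beta> \<omega> < 1" using \<open>\<not> \<alpha> \<omega> + \<beta> \<omega> \<ge> 1\<close> by simp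
    fix t :: real assume t: "0 < t" "t \<le> 1"
    have "(?A + t powr (\<alpha> \<omega> + \<beta> \<omega>)) powr ?p \<le> hdens k Vs \<alpha> \<beta> {0, 1} (probe k t) powr ?p"
      using hdens_probe_gain[OF fin nonneg assms(4,5) t(1)] A_ge_one size_pos
      by (intro powr_mono2) auto
    also have "\<dots> \<le> ?A powr ?p
        + hnorm k Vs \<alpha> \<beta> (count_space {0, 1}) (\<lambda>y. complex_of_real (ones_ind k y)) * t"
      using seminorm_probe_triangle[OF fin seminorm] t(1) by simp
    finally show "(?A + t powr (\<alpha> \<omega> + \<beta> \<omega>)) powr ?p \<le> ?A powr ?p
        + hnorm k Vs \<alpha> \<beta> (count_space {0, 1}) (\<lambda>y. complex_of_real (ones_ind k y)) * t" .
  qed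
qed

end
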